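(* Let $L$ be a finite-dimensional Lie algebra over an algebraically closed field. Then $L$ is solvable if and only if every maximal subalgebra of $L$ has a maximal completion $C$ in $L$ with $C/k(C)$ abelian.
   Context: For a nonzero subalgebra $X$ of $L$, the strict core $k(X)$ is the sum of all ideals of $L$ that are proper subalgebras of $X$ (it is $0$ if there are none). For a maximal subalgebra $M$, a subalgebra $C$ is a completion of $M$ if $C\not\subseteq M$ but every proper subalgebra of $C$ that is an ideal of $L$ is contained in $M$; $I(M)$ is the set of completions of $M$ ordered by inclusion, and a maximal completion is a maximal element of $I(M)$. *)

theory Defs
  imports Main "HOL-Computational_Algebra.Polynomial"
begin

definition alg_closed_field :: "'k::field itself \<Rightarrow> bool" where
  "alg_closed_field _ \<longleftrightarrow> (\<forall>p :: 'k poly. degree p > 0 \<longrightarrow> (\<exists>x. poly p x = 0))"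

definition lie_algebra :: "('k::field \<Rightarrow> 'v::ab_group_add \<Rightarrow> 'v) \<Rightarrow> ('v \<Rightarrow> 'v \<Rightarrow> 'v) \<Rightarrow> bool" where
  "lie_algebra sc br \<longleftrightarrow> vector_space sc
     \<and> (\<forall>x y z. br (x + y) z = br x z + br y z)
     \<and> (\<forall>x y z. br x (y + z) = br x y + br x z)
     \<and> (\<forall>a x y. br (sc a x) y = sc a (br x y))
     \<and> (\<forall>a x y. br x (sc a y) = sc a (br x y))
     \<and> (\<forall>x. br x x = 0)
     \<and> (\<forall>x y z. br x (br y z) + br y (br z x) + br z (br x y) = 0)"

definition finite_dim :: "('k::field \<Rightarrow> 'v::ab_group_add \<Rightarrow> 'v) \<Rightarrow> bool" where
  "finite_dim sc \<longleftrightarrow> (\<exists>B. finite B \<and> module.span sc B = UNIV)"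

definition lie_subalgebra :: "('k::field \<Rightarrow> 'v::ab_group_add \<Rightarrow> 'v) \<Rightarrow> ('v \<Rightarrow> 'v \<Rightarrow> 'v) \<Rightarrow> 'v set \<Rightarrow> bool" where
  "lie_subalgebra sc br X \<longleftrightarrow> module.subspace sc X \<and> (\<forall>x\<in>X. \<forall>y\<in>X. br x y \<in> X)"

definition lie_ideal :: "('k::field \<Rightarrow> 'v::ab_group_add \<Rightarrow> 'v) \<Rightarrow> ('v \<Rightarrow> 'v \<Rightarrow> 'v) \<Rightarrow> 'v set \<Rightarrow> bool" where
  "lie_ideal sc br I \<longleftrightarrow> module.subspace sc I \<and> (\<forall>x. \<forall>y\<in>I. br x y \<in> I)"

definition maximal_subalgebra :: "('k::field \<Rightarrow> 'v::ab_group_add \<Rightarrow> 'v) \<Rightarrow> ('v \<Rightarrow> 'v \<Rightarrow> 'v) \<Rightarrow> 'v set \<Rightarrow> bool" where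
  "maximal_subalgebra sc br M \<longleftrightarrow> lie_subalgebra sc br M \<and> M \<noteq> UNIV
     \<and> (\<forall>N. lie_subalgebra sc br N \<and> M \<subseteq> N \<longrightarrow> N = M \<or> N = UNIV)"

fun derived_series :: "('k::field \<Rightarrow> 'v::ab_group_add \<Rightarrow> 'v) \<Rightarrow> ('v \<Rightarrow> 'v \<Rightarrow> 'v) \<Rightarrow> nat \<Rightarrow> 'v set" where
  "derived_series sc br 0 = UNIV"
| "derived_series sc br (Suc n) =
     module.span sc {br x y | x y. x \<in> derived_series sc br n \<and> y \<in> derived_series sc br n}"

definition solvable_lie :: "('k::field \<Rightarrow> 'v::ab_group_add \<Rightarrow> 'v) \<Rightarrow> ('v \<Rightarrow> 'v \<Rightarrow> 'v) \<Rightarrow> bool" where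
  "solvable_lie sc br \<longleftrightarrow> (\<exists>n. derived_series sc br n = {0})"

text \<open>Strict core k(X): sum of all ideals of L that are proper subalgebras of X
  (the span of their union; this is {0} if there are none).\<close>
definition strict_core :: "('k::field \<Rightarrow> 'v::ab_group_add \<Rightarrow> 'v) \<Rightarrow> ('v \<Rightarrow> 'v \<Rightarrow> 'v) \<Rightarrow> 'v set \<Rightarrow> 'v set" where
  "strict_core sc br X = module.span sc (\<Union>{I. lie_ideal sc br I \<and> I \<subset> X})"

definition completion :: "('k::field \<Rightarrow> 'v::ab_group_add \<Rightarrow> 'v) \<Rightarrow> ('v \<Rightarrow> 'v \<Rightarrow> 'v) \<Rightarrow> 'v set \<Rightarrow> 'v set \<Rightarrow> bool" where
  "completion sc br M C \<longleftrightarrow> lie_subalgebra sc br C \<and> \<not> C \<subseteq> M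
     \<and> (\<forall>I. lie_ideal sc br I \<and> I \<subset> C \<longrightarrow> I \<subseteq> M)"

definition maximal_completion :: "('k::field \<Rightarrow> 'v::ab_group_add \<Rightarrow> 'v) \<Rightarrow> ('v \<Rightarrow> 'v \<Rightarrow> 'v) \<Rightarrow> 'v set \<Rightarrow> 'v set \<Rightarrow> bool" where
  "maximal_completion sc br M C \<longleftrightarrow> completion sc br M C
     \<and> (\<forall>D. completion sc br M D \<and> C \<subseteq> D \<longrightarrow> D = C)"

text \<open>C/k(C) is abelian: [C,C] \<subseteq> k(C).\<close>
definition abelian_mod_strict_core :: "('k::field \<Rightarrow> 'v::ab_group_add \<Rightarrow> 'v) \<Rightarrow> ('v \<Rightarrow> 'v \<Rightarrow> 'v) \<Rightarrow> 'v set \<Rightarrow> bool" where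
  "abelian_mod_strict_core sc br C \<longleftrightarrow> (\<forall>x\<in>C. \<forall>y\<in>C. br x y \<in> strict_core sc br C)"

end

theory Submission
  imports Defs "HOL-Library.Set_Algebras"
begin

text \<open>
  If L is solvable, an ideal A of minimal dimension not contained in a maximal subalgebra M is a
  maximal completion of M, and [A,A] is a proper ideal inside A, hence lies in k(A).

  Conversely, let P be the perfect last term of the derived series of a non-solvable L, and N an
  ideal of maximal dimension not containing P, so that P \<subseteq> I + N for every ideal I \<not>\<subseteq> N. By
  Engel's theorem and the Fitting decomposition, both modulo N, some maximal subalgebra M contains
  N but not P, and every subalgebra Y \<not>\<subseteq> M with N \<subseteq> Y and P \<not>\<subseteq> Y is a completion of M. If a
  maximal completion C has C/k(C) abelian, then k(C) \<subseteq> N, so [C,C] \<subseteq> N \<subseteq> C. Over an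
  algebraically closed field a common eigenvector of ad C on L/C yields a subalgebra Y \<supset> C whose
  second derived algebra lies in N; being perfect, P is not in Y, so Y is a larger completion.
\<close>

lemma range_funpow_stable:
  fixes T :: "'a \<Rightarrow> 'a" and m i :: nat
  assumes "range (T ^^ Suc m) = range (T ^^ m)"
  shows "range (T ^^ (m + i)) = range (T ^^ m)"
proof (induction i)
  case (Suc i)
  have "range (T ^^ Suc (m + i)) = T ` range (T ^^ (m + i))"
    by (simp add: image_comp)
  also have "\<dots> = range (T ^^ Suc m)"
    using Suc by (simp add: image_comp)
  finally show ?case
    using assms by simp
qed simp

lemma Poly_map_upt_nonzero: "i < n \<Longrightarrow> c i \<noteq> 0 \<Longrightarrow> Poly (map c [0..<n]) \<noteq> 0"
  by (metis coeff_0 coeff_Poly_eq diff_zero length_map length_upt nth_default_nth nth_map_upt add_0)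

locale fin_dim_lie_algebra = finite_dimensional_vector_space sc Basis
  for sc :: "'k::field \<Rightarrow> 'v::ab_group_add \<Rightarrow> 'v" (infixr \<open>*s\<close> 75) and Basis +
  fixes br :: "'v \<Rightarrow> 'v \<Rightarrow> 'v"
  assumes bracket_add_left: "br (x + y) z = br x z + br y z"
    and bracket_add_right: "br x (y + z) = br x y + br x z"
    and bracket_scale_left: "br (a *s x) y = a *s br x y"
    and bracket_scale_right: "br x (a *s y) = a *s br x y"
    and bracket_self: "br x x = 0"
    and jacobi: "br x (br y z) + br y (br z x) + br z (br x y) = 0"
begin

lemma bracket_zero_left [simp]: "br 0 y = 0"
  using bracket_add_left[of 0 0 y] by simp

lemma bracket_zero_right [simp]: "br y 0 = 0"
  using bracket_add_right[of y 0 0] by simp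

lemma bracket_minus_right: "br y (- x) = - br y x"
  using bracket_add_right[of y x "- x"] by (simp add: eq_neg_iff_add_eq_0 add.commute)

lemma bracket_diff_right: "br y (x - x') = br y x - br y x'"
  using bracket_add_right[of y x "- x'"] by (simp add: bracket_minus_right)

lemma bracket_anticomm: "br y x = - br x y"
proof -
  have "br (x + y) (x + y) = br x x + br x y + (br y x + br y y)"
    by (simp only: bracket_add_left bracket_add_right add_ac)
  then have "br x y + br y x = 0"
    by (simp add: bracket_self)
  then show ?thesis
    by (simp add: eq_neg_iff_add_eq_0 add.commute)
qed

lemma bracket_derivation: "br x (br y z) = br (br x y) z + br y (br x z)"
proof -
  have "br y (br z x) = - br y (br x z)" and "br z (br x y) = - br (br x y) z"
    using bracket_anticomm[of z x] bracket_anticomm[of z "br x y"] by (simp_all add: bracket_minus_right)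
  then have "br x (br y z) - br y (br x z) - br (br x y) z = 0"
    using jacobi[of x y z] by (simp add: algebra_simps)
  then show ?thesis
    by (simp add: algebra_simps)
qed

lemma module_hom_bracket: "module_hom sc sc (br x)"
  unfolding module_hom_iff by (simp add: bracket_add_right bracket_scale_right module_axioms)

abbreviation subalgebra :: "'v set \<Rightarrow> bool" where
  "subalgebra X \<equiv> lie_subalgebra sc br X"

abbreviation ideal :: "'v set \<Rightarrow> bool" where
  "ideal X \<equiv> lie_ideal sc br X"

lemma subalgebraI:
  "subspace X \<Longrightarrow> (\<And>x y. x \<in> X \<Longrightarrow> y \<in> X \<Longrightarrow> br x y \<in> X) \<Longrightarrow> subalgebra X"
  by (simp add: lie_subalgebra_def)

lemma idealI: "subspace X \<Longrightarrow> (\<And>x y. y \<in> X \<Longrightarrow> br x y \<in> X) \<Longrightarrow> ideal X"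
  by (simp add: lie_ideal_def)

lemma subalgebra_subspace: "subalgebra X \<Longrightarrow> subspace X"
  by (simp add: lie_subalgebra_def)

lemma ideal_subspace: "ideal I \<Longrightarrow> subspace I"
  by (simp add: lie_ideal_def)

lemma subalgebra_bracket: "subalgebra X \<Longrightarrow> x \<in> X \<Longrightarrow> y \<in> X \<Longrightarrow> br x y \<in> X"
  by (simp add: lie_subalgebra_def)

lemma ideal_bracket_right: "ideal I \<Longrightarrow> y \<in> I \<Longrightarrow> br x y \<in> I"
  by (simp add: lie_ideal_def)

lemma ideal_bracket_left: "ideal I \<Longrightarrow> y \<in> I \<Longrightarrow> br y x \<in> I"
  by (metis bracket_anticomm ideal_bracket_right ideal_subspace subspace_neg)

lemma ideal_imp_subalgebra: "ideal I \<Longrightarrow> subalgebra I"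
  by (simp add: lie_ideal_def lie_subalgebra_def)

lemma ideal_UNIV: "ideal UNIV"
  by (simp add: lie_ideal_def)

lemma ideal_zero: "ideal {0}"
  by (simp add: lie_ideal_def)

lemma maximal_subalgebra_subspace: "maximal_subalgebra sc br M \<Longrightarrow> subspace M"
  by (simp add: maximal_subalgebra_def lie_subalgebra_def)

lemma subspace_set_plus:
  assumes "subspace X" "subspace Y"
  shows "subspace (X + Y)"
proof -
  have "X + Y = {x + y | x y. x \<in> X \<and> y \<in> Y}"
    by (auto simp: set_plus_def)
  then show ?thesis
    using subspace_sums[OF assms] by simp
qed

lemma set_plus_subset_left: "subspace Y \<Longrightarrow> X \<subseteq> X + Y"
  using subspace_0 by (force simp: set_plus_def)

lemma set_plus_subset_right: "subspace X \<Longrightarrow> Y \<subseteq> X + Y"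
  using subspace_0 by (force simp: set_plus_def)

lemma set_plus_least: "X \<subseteq> Z \<Longrightarrow> Y \<subseteq> Z \<Longrightarrow> subspace Z \<Longrightarrow> X + Y \<subseteq> Z"
  by (auto simp: set_plus_def intro: subspace_add)

lemma ideal_set_plus:
  assumes "ideal I" "ideal J"
  shows "ideal (I + J)"
proof (rule idealI)
  show "subspace (I + J)"
    using assms by (simp add: ideal_subspace subspace_set_plus)
  fix x y
  assume "y \<in> I + J"
  then obtain a b where "a \<in> I" "b \<in> J" "y = a + b"
    by (auto elim: set_plus_elim)
  then show "br x y \<in> I + J"
    using assms by (simp add: bracket_add_right set_plus_intro ideal_bracket_right)
qed

lemma bracket_span_induct:
  assumes "v \<in> span S" "subspace Z" "\<And>u. u \<in> S \<Longrightarrow> br x u \<in> Z"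
  shows "br x v \<in> Z"
proof -
  have "subspace {v. br x v \<in> Z}"
    using assms(2) by (auto simp: subspace_def bracket_add_right bracket_scale_right)
  from span_subspace_induct[OF assms(1) this] assms(3) show ?thesis
    by auto
qed

lemma ideal_span_Union:
  assumes "\<And>I. I \<in> F \<Longrightarrow> ideal I"
  shows "ideal (span (\<Union>F))"
proof (rule idealI)
  fix x y
  assume "y \<in> span (\<Union>F)"
  then show "br x y \<in> span (\<Union>F)"
    by (rule bracket_span_induct[OF _ subspace_span]) (use assms in \<open>auto intro: span_base ideal_bracket_right\<close>)
qed simp

lemma ideal_strict_core: "ideal (strict_core sc br X)"
  unfolding strict_core_def by (rule ideal_span_Union) blast

definition derived :: "'v set \<Rightarrow> 'v set" where
  "derived X = span {br x y | x y. x \<in> X \<and> y \<in> X}"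

lemma subspace_derived: "subspace (derived X)"
  by (simp add: derived_def)

lemma bracket_in_derived: "x \<in> X \<Longrightarrow> y \<in> X \<Longrightarrow> br x y \<in> derived X"
  unfolding derived_def by (rule span_base) blast

lemma derived_least:
  "(\<And>x y. x \<in> X \<Longrightarrow> y \<in> X \<Longrightarrow> br x y \<in> Z) \<Longrightarrow> subspace Z \<Longrightarrow> derived X \<subseteq> Z"
  unfolding derived_def by (rule span_minimal) auto

lemma derived_mono: "X \<subseteq> Y \<Longrightarrow> derived X \<subseteq> derived Y"
  unfolding derived_def by (rule span_mono) blast

lemma derived_subset: "subalgebra X \<Longrightarrow> derived X \<subseteq> X"
  by (rule derived_least) (auto simp: subalgebra_bracket subalgebra_subspace)

lemma perfect_subset:
  assumes "P \<subseteq> derived P" "P \<subseteq> X" "\<And>x y. x \<in> X \<Longrightarrow> y \<in> X \<Longrightarrow> br x y \<in> Z" "subspace Z"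
  shows "P \<subseteq> Z"
  using assms derived_least[of X Z] derived_mono[of P X] by blast

lemma ideal_derived:
  assumes "ideal I"
  shows "ideal (derived I)"
proof (rule idealI)
  fix x y
  assume "y \<in> derived I"
  then show "br x y \<in> derived I"
    unfolding derived_def
  proof (rule bracket_span_induct[OF _ subspace_span])
    fix u
    assume "u \<in> {br x y |x y. x \<in> I \<and> y \<in> I}"
    then obtain a b where u: "u = br a b" "a \<in> I" "b \<in> I"
      by auto
    have "br x u = br (br x a) b + br a (br x b)"
      using u(1) bracket_derivation[of x a b] by simp
    also have "\<dots> \<in> span {br x y |x y. x \<in> I \<and> y \<in> I}"
      using u assms by (intro span_add span_base) (auto intro: ideal_bracket_right)
    finally show "br x u \<in> span {br x y |x y. x \<in> I \<and> y \<in> I}" .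
  qed
qed (rule subspace_derived)

lemma derived_series_Suc_eq_derived: "derived_series sc br (Suc n) = derived (derived_series sc br n)"
  by (simp add: derived_def)

lemma ideal_derived_series: "ideal (derived_series sc br n)"
  by (induction n) (simp_all add: derived_series_Suc_eq_derived ideal_UNIV ideal_derived del: derived_series.simps(2))

lemma perfect_subset_derived_series:
  assumes "A \<subseteq> derived A"
  shows "A \<subseteq> derived_series sc br n"
proof (induction n)
  case (Suc n)
  then show ?case
    using derived_mono[OF Suc] assms by (simp add: derived_series_Suc_eq_derived del: derived_series.simps(2))
qed simp

lemma dim_strict_mono: "subspace X \<Longrightarrow> subspace Y \<Longrightarrow> X \<subset> Y \<Longrightarrow> dim X < dim Y"
  by (metis dim_psubset span_eq_iff)

lemma ex_max_dim:
  assumes "\<Phi> X0"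
  obtains X where "\<Phi> X" "\<And>Y. \<Phi> Y \<Longrightarrow> dim Y \<le> dim X"
proof -
  obtain X where "\<Phi> X" "\<forall>Y. \<Phi> Y \<longrightarrow> dimension - dim X \<le> dimension - dim Y"
    using ex_has_least_nat[of \<Phi> X0 "\<lambda>X. dimension - dim X"] assms by blast
  moreover have "dim Y \<le> dimension" for Y
    by (rule dim_subset_UNIV)
  ultimately show ?thesis
    using that by (metis diff_le_mono2 diff_diff_cancel)
qed

lemma ex_min_dim:
  assumes "\<Phi> X0"
  obtains X where "\<Phi> X" "\<And>Y. \<Phi> Y \<Longrightarrow> dim X \<le> dim Y"
  using ex_has_least_nat[of \<Phi> X0 dim] assms by blast

lemma decreasing_subspaces_stabilize:
  assumes "\<And>n. subspace (R n)" "\<And>n. R (Suc n) \<subseteq> R n"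
  obtains m where "R (Suc m) = R m"
proof -
  have "\<exists>m. R (Suc m) = R m"
  proof (rule ccontr)
    assume "\<nexists>m. R (Suc m) = R m"
    then have "dim (R m) + m \<le> dim (R 0)" for m
    proof (induction m)
      case (Suc m)
      then have "dim (R (Suc m)) < dim (R m)"
        using assms by (intro dim_strict_mono) auto
      then show ?case
        using Suc by simp
    qed simp
    from this[of "Suc dimension"] dim_subset_UNIV[of "R 0"] show False
      by simp
  qed
  then show ?thesis
    using that by blast
qed

subsection \<open>Solvable algebras\<close>

lemma ex_minimal_ideal_not_in:
  assumes "M \<noteq> UNIV"
  shows "\<exists>A. ideal A \<and> \<not> A \<subseteq> M \<and> (\<forall>I. ideal I \<and> I \<subset> A \<longrightarrow> I \<subseteq> M)"
proof -
  obtain A where A: "ideal A \<and> \<not> A \<subseteq> M" and min: "\<And>Y. ideal Y \<and> \<not> Y \<subseteq> M \<Longrightarrow> dim A \<le> dim Y"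
    using ex_min_dim[of "\<lambda>Y. ideal Y \<and> \<not> Y \<subseteq> M" UNIV] ideal_UNIV assms by blast
  have "I \<subseteq> M" if "ideal I" "I \<subset> A" for I
  proof (rule ccontr)
    assume "\<not> I \<subseteq> M"
    then have "dim A \<le> dim I"
      using min that(1) by blast
    moreover have "dim I < dim A"
      using that A by (intro dim_strict_mono) (auto simp: ideal_subspace)
    ultimately show False
      by simp
  qed
  with A show ?thesis
    by blast
qed

lemma ideal_completion_imp_maximal:
  assumes "ideal A" "completion sc br M A"
  shows "maximal_completion sc br M A"
proof -
  have "D = A" if "completion sc br M D" "A \<subseteq> D" for D
  proof (rule ccontr)
    assume "D \<noteq> A"
    with that assms(1) have "A \<subseteq> M"
      unfolding completion_def by blast
    with assms(2) show False
      unfolding completion_def by blast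
  qed
  with assms(2) show ?thesis
    unfolding maximal_completion_def by blast
qed

lemma solvable_perfect_trivial:
  assumes "solvable_lie sc br" "A \<subseteq> derived A"
  shows "A \<subseteq> {0}"
  using assms perfect_subset_derived_series[of A] unfolding solvable_lie_def by blast

lemma derived_subset_strict_core:
  assumes "ideal A" "derived A \<noteq> A"
  shows "derived A \<subseteq> strict_core sc br A"
proof -
  have "ideal (derived A)" "derived A \<subset> A"
    using assms ideal_derived[OF assms(1)] derived_subset[OF ideal_imp_subalgebra[OF assms(1)]] by auto
  then have "derived A \<subseteq> \<Union>{I. ideal I \<and> I \<subset> A}"
    by blast
  then show ?thesis
    unfolding strict_core_def using span_superset by blast
qed

theorem solvable_imp_abelian_maximal_completion:
  assumes "solvable_lie sc br" "maximal_subalgebra sc br M"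
  shows "\<exists>C. maximal_completion sc br M C \<and> abelian_mod_strict_core sc br C"
proof -
  have "M \<noteq> UNIV"
    using assms(2) by (simp add: maximal_subalgebra_def)
  then obtain A where A: "ideal A" "\<not> A \<subseteq> M" "\<forall>I. ideal I \<and> I \<subset> A \<longrightarrow> I \<subseteq> M"
    using ex_minimal_ideal_not_in by blast
  have "completion sc br M A"
    unfolding completion_def using A(2,3) ideal_imp_subalgebra[OF A(1)] by blast
  then have "maximal_completion sc br M A"
    by (rule ideal_completion_imp_maximal[OF A(1)])
  moreover have "derived A \<noteq> A"
  proof
    assume "derived A = A"
    then have "A \<subseteq> {0}"
      by (intro solvable_perfect_trivial[OF assms(1)]) simp
    with A(2) subspace_0[OF maximal_subalgebra_subspace[OF assms(2)]] show False
      by blast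
  qed
  then have "abelian_mod_strict_core sc br A"
    using derived_subset_strict_core[OF A(1)] bracket_in_derived
    unfolding abelian_mod_strict_core_def by blast
  ultimately show ?thesis
    by blast
qed

subsection \<open>Fitting decomposition and Engel's theorem modulo an ideal\<close>

lemma module_hom_funpow: "module_hom sc sc T \<Longrightarrow> module_hom sc sc (T ^^ k)"
proof (induction k)
  case 0
  then show ?case
    unfolding module_hom_iff by (simp add: module_axioms)
next
  case (Suc k)
  then show ?case
    using module_hom_compose[OF Suc.IH[OF Suc.prems] Suc.prems] by (simp add: comp_def)
qed

lemma module_hom_bracket_pow: "module_hom sc sc (br x ^^ k)"
  by (rule module_hom_funpow[OF module_hom_bracket])

lemma bracket_pow_add: "(br x ^^ k) (u + v) = (br x ^^ k) u + (br x ^^ k) v"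
  using module_hom.add[OF module_hom_bracket_pow] by blast

lemma bracket_pow_diff: "(br x ^^ k) (u - v) = (br x ^^ k) u - (br x ^^ k) v"
  using module_hom.diff[OF module_hom_bracket_pow] by blast

lemma bracket_pow_scale: "(br x ^^ k) (c *s u) = c *s (br x ^^ k) u"
  using module_hom.scale[OF module_hom_bracket_pow] by blast

lemma ideal_bracket_pow: "ideal J \<Longrightarrow> u \<in> J \<Longrightarrow> (br x ^^ k) u \<in> J"
  by (induction k) (auto intro: ideal_bracket_right)

lemma ideal_bracket_pow_mono:
  assumes "ideal J" "(br x ^^ k) u \<in> J" "k \<le> m"
  shows "(br x ^^ m) u \<in> J"
proof -
  have "(br x ^^ m) u = (br x ^^ (m - k)) ((br x ^^ k) u)"
    using assms(3) by (metis funpow_add le_add_diff_inverse2 o_apply)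
  then show ?thesis
    using ideal_bracket_pow[OF assms(1,2)] by simp
qed

lemma bracket_pow_leibniz:
  "(br x ^^ n) (br y z) \<in> span {br ((br x ^^ i) y) ((br x ^^ j) z) | i j. i + j = n}"
proof (induction n)
  case 0
  then show ?case
    by (intro span_base) force
next
  case (Suc n)
  let ?S = "{br ((br x ^^ i) y) ((br x ^^ j) z) | i j. i + j = Suc n}"
  have "br x ((br x ^^ n) (br y z)) \<in> span ?S"
  proof (rule bracket_span_induct[OF Suc.IH subspace_span])
    fix u
    assume "u \<in> {br ((br x ^^ i) y) ((br x ^^ j) z) |i j. i + j = n}"
    then obtain i j where u: "u = br ((br x ^^ i) y) ((br x ^^ j) z)" "i + j = n"
      by auto
    have "br ((br x ^^ Suc i) y) ((br x ^^ j) z) \<in> ?S"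
      unfolding mem_Collect_eq by (rule exI[of _ "Suc i"], rule exI[of _ j]) (use u(2) in simp)
    moreover have "br ((br x ^^ i) y) ((br x ^^ Suc j) z) \<in> ?S"
      unfolding mem_Collect_eq by (rule exI[of _ i], rule exI[of _ "Suc j"]) (use u(2) in simp)
    moreover have "br x u = br ((br x ^^ Suc i) y) ((br x ^^ j) z) + br ((br x ^^ i) y) ((br x ^^ Suc j) z)"
      using u bracket_derivation[of x "(br x ^^ i) y" "(br x ^^ j) z"] by simp
    ultimately show "br x u \<in> span ?S"
      by (simp add: span_add span_base)
  qed
  then show ?case
    by simp
qed

definition fitting_null :: "'v set \<Rightarrow> 'v \<Rightarrow> 'v set" where
  "fitting_null J x = {y. \<exists>k. (br x ^^ k) y \<in> J}"

lemma ideal_subset_fitting_null: "J \<subseteq> fitting_null J x"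
  unfolding fitting_null_def by (auto intro!: exI[of _ 0])

lemma subalgebra_fitting_null:
  assumes J: "ideal J"
  shows "subalgebra (fitting_null J x)"
proof (rule subalgebraI)
  have sJ: "subspace J"
    using J by (rule ideal_subspace)
  show "subspace (fitting_null J x)"
  proof (rule subspaceI)
    show "0 \<in> fitting_null J x"
      using ideal_subset_fitting_null subspace_0[OF sJ] by blast
  next
    fix u v
    assume "u \<in> fitting_null J x" "v \<in> fitting_null J x"
    then obtain k l where "(br x ^^ k) u \<in> J" "(br x ^^ l) v \<in> J"
      by (auto simp: fitting_null_def)
    then have "(br x ^^ (k + l)) u \<in> J" "(br x ^^ (k + l)) v \<in> J"
      by (auto intro: ideal_bracket_pow_mono[OF J])
    then show "u + v \<in> fitting_null J x"
      unfolding fitting_null_def by (auto simp: bracket_pow_add intro!: subspace_add[OF sJ])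
  next
    fix c u
    assume "u \<in> fitting_null J x"
    then show "c *s u \<in> fitting_null J x"
      unfolding fitting_null_def by (auto simp: bracket_pow_scale intro!: subspace_scale[OF sJ])
  qed
  fix y z
  assume "y \<in> fitting_null J x" "z \<in> fitting_null J x"
  then obtain k l where k: "(br x ^^ k) y \<in> J" and l: "(br x ^^ l) z \<in> J"
    by (auto simp: fitting_null_def)
  have "span {br ((br x ^^ i) y) ((br x ^^ j) z) | i j. i + j = k + l} \<subseteq> J"
  proof (rule span_minimal[OF _ sJ], safe)
    fix i j
    assume "i + j = k + l"
    then consider "k \<le> i" | "l \<le> j"
      by linarith
    then show "br ((br x ^^ i) y) ((br x ^^ j) z) \<in> J"
      by cases (use ideal_bracket_pow_mono[OF J k] ideal_bracket_pow_mono[OF J l]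
          ideal_bracket_left[OF J] ideal_bracket_right[OF J] in blast)+
  qed
  then show "br y z \<in> fitting_null J x"
    using bracket_pow_leibniz[of "k + l" x y z] unfolding fitting_null_def by blast
qed

lemma fitting_null_plus_ideal:
  assumes J: "ideal J" and P: "ideal P" and x: "x \<in> P"
  shows "fitting_null J x + P = UNIV"
proof -
  \<comment> \<open>y splits into a part in the null component and a part in the stable range of ad x,
    and that range lies in P because x does\<close>
  define R where "R k = range (br x ^^ k)" for k
  have "subspace (R k)" for k
    unfolding R_def using module_hom.subspace_image[OF module_hom_bracket_pow subspace_UNIV] by blast
  moreover have "R (Suc k) \<subseteq> R k" for k
    unfolding R_def by (auto simp del: funpow.simps simp: funpow_Suc_right)
  ultimately obtain m where m: "R (Suc m) = R m"
    by (rule decreasing_subspaces_stabilize)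
  have stable: "R (m + i) = R m" for i
    using range_funpow_stable[of m "br x" i] m unfolding R_def by simp
  define n where "n = Suc m"
  have Rn: "R (n + n) = R n"
    using stable[of "Suc (Suc m)"] stable[of 1] unfolding n_def by simp
  have "y \<in> fitting_null J x + P" for y
  proof -
    obtain z where "(br x ^^ n) y = (br x ^^ (n + n)) z"
      using Rn rangeI[of "br x ^^ n" y] unfolding R_def by (metis rangeE)
    then have z: "(br x ^^ n) y = (br x ^^ n) ((br x ^^ n) z)"
      by (simp only: funpow_add comp_apply)
    have "y - (br x ^^ n) z \<in> fitting_null J x"
      unfolding fitting_null_def using z subspace_0[OF ideal_subspace[OF J]]
      by (auto simp: bracket_pow_diff intro!: exI[of _ n])
    moreover have "(br x ^^ n) z \<in> P"
      unfolding n_def using x by (simp add: ideal_bracket_left[OF P])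
    ultimately show ?thesis
      by (metis diff_add_cancel set_plus_intro)
  qed
  then show ?thesis
    by blast
qed

lemma span_insert_subspaceE:
  assumes "subspace A" "u \<in> span (insert b A)"
  obtains c a where "a \<in> A" "u = a + c *s b"
  using assms by (metis diff_add_cancel span_breakdown_eq span_eq_iff)

abbreviation ad_invariant :: "'v set \<Rightarrow> 'v set \<Rightarrow> bool" where
  "ad_invariant Q A \<equiv> \<forall>x\<in>Q. \<forall>a\<in>A. br x a \<in> A"

lemma subalgebra_span_insert:
  assumes h: "subalgebra h" and z: "\<forall>x\<in>h. br x z \<in> h"
  shows "subalgebra (span (insert z h))"
proof (rule subalgebraI)
  have sh: "subspace h"
    using h by (rule subalgebra_subspace)
  fix u v
  assume "u \<in> span (insert z h)" "v \<in> span (insert z h)"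
  then obtain c a d e where a: "a \<in> h" "u = a + c *s z" and e: "e \<in> h" "v = e + d *s z"
    by (metis span_insert_subspaceE[OF sh])
  have "br u v = br a e + d *s br a z + c *s br z e"
    using a e by (simp add: bracket_add_left bracket_add_right bracket_scale_left bracket_scale_right
        bracket_self add_ac)
  moreover have "br z e \<in> h"
    using z e(1) bracket_anticomm subspace_neg[OF sh] by metis
  ultimately have "br u v \<in> h"
    using a e z h by (simp add: subspace_add[OF sh] subspace_scale[OF sh] subalgebra_bracket)
  then show "br u v \<in> span (insert z h)"
    by (meson span_superset subset_insertI subsetD)
qed simp

lemma common_kernel_span_insert:
  assumes J: "ideal J" "J \<subseteq> A" and sA: "subspace A" and sB: "subspace B" and AB: "A \<subseteq> B"
    and z: "\<forall>x\<in>h. br x z \<in> h" "fitting_null J z = UNIV" "ad_invariant {z} A" "ad_invariant {z} B"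
    and h: "subspace h" "ad_invariant h A"
    and b0: "b0 \<in> B" "b0 \<notin> A" "\<forall>x\<in>h. br x b0 \<in> A"
  shows "\<exists>b\<in>B. b \<notin> A \<and> (\<forall>x\<in>span (insert z h). br x b \<in> A)"
proof -
  \<comment> \<open>since z normalises h, the common kernel W of h modulo A is stable under ad z; the
    iterates of ad z on b0 stay in W and, z being nilpotent modulo J, eventually enter A\<close>
  define W where "W = {b \<in> B. \<forall>y\<in>h. br y b \<in> A}"
  have zW: "br z w \<in> W" if "w \<in> W" for w
  proof -
    have "br y (br z w) \<in> A" if "y \<in> h" for y
    proof -
      have "br (br y z) w \<in> A" "br z (br y w) \<in> A"
        using z(1,3) \<open>w \<in> W\<close> that unfolding W_def by auto
      then show ?thesis
        using subspace_add[OF sA] bracket_derivation[of y z w] by simp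
    qed
    then show ?thesis
      using that z(4) unfolding W_def by blast
  qed
  have zWk: "(br z ^^ k) b0 \<in> W" for k
  proof (induction k)
    case 0
    then show ?case
      using b0 unfolding W_def by simp
  next
    case (Suc k)
    then show ?case
      using zW by simp
  qed
  have "\<exists>k. (br z ^^ k) b0 \<in> A"
    using z(2) J(2) unfolding fitting_null_def by blast
  then obtain k where kmin: "(br z ^^ k) b0 \<notin> A" and kA: "(br z ^^ Suc k) b0 \<in> A"
    using exists_least_lemma[of "\<lambda>k. (br z ^^ k) b0 \<in> A"] b0(2) by auto
  define b where "b = (br z ^^ k) b0"
  have bW: "b \<in> W"
    unfolding b_def by (rule zWk)
  have "br x b \<in> A" if x: "x \<in> span (insert z h)" for x
  proof -
    obtain c a where a: "a \<in> h" "x = a + c *s z"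
      using span_insert_subspaceE[OF h(1) x] .
    have "br x b = br a b + c *s br z b"
      using a by (simp add: bracket_add_left bracket_scale_left)
    then show ?thesis
      using a bW kA unfolding W_def b_def by (simp add: subspace_add[OF sA] subspace_scale[OF sA])
  qed
  then show ?thesis
    using bW kmin unfolding W_def b_def by blast
qed

lemma span_insert_eq_if_maximal:
  assumes Q: "subspace Q" and h: "subalgebra h" "J \<subseteq> h" "h \<subset> Q"
    and hmax: "\<And>Y. subalgebra Y \<and> J \<subseteq> Y \<and> Y \<subset> Q \<Longrightarrow> dim Y \<le> dim h"
    and z: "z \<in> Q" "z \<notin> h" "\<forall>x\<in>h. br x z \<in> h"
  shows "span (insert z h) = Q"
proof (rule ccontr)
  have hz: "h \<subset> span (insert z h)"
    using z(2) span_superset[of "insert z h"] by blast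
  assume "span (insert z h) \<noteq> Q"
  moreover have "span (insert z h) \<subseteq> Q"
    using z(1) h(3) Q by (intro span_minimal) auto
  moreover have "subalgebra (span (insert z h))"
    using h(1) z(3) by (rule subalgebra_span_insert)
  ultimately have "dim (span (insert z h)) \<le> dim h"
    using hmax h(2) hz by blast
  moreover have "dim h < dim (span (insert z h))"
    using subalgebra_subspace[OF h(1)] hz by (intro dim_strict_mono) auto
  ultimately show False
    by simp
qed

lemma engel_mod_ideal:
  assumes J: "ideal J"
  shows "subalgebra Q \<Longrightarrow> J \<subseteq> Q \<Longrightarrow> \<forall>x\<in>Q. fitting_null J x = UNIV \<Longrightarrow>
    subspace A \<Longrightarrow> subspace B \<Longrightarrow> J \<subseteq> A \<Longrightarrow> A \<subset> B \<Longrightarrow> ad_invariant Q A \<Longrightarrow> ad_invariant Q B \<Longrightarrow>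
    \<exists>b\<in>B. b \<notin> A \<and> (\<forall>x\<in>Q. br x b \<in> A)"
proof (induction "dim Q" arbitrary: Q A B rule: less_induct)
  case less
  note Q = less.prems
  show ?case
  proof (cases "Q = J")
    case True
    obtain b where "b \<in> B" "b \<notin> A"
      using Q(7) by blast
    then show ?thesis
      using True Q(6) ideal_bracket_left[OF J] by blast
  next
    case False
    \<comment> \<open>a maximal subalgebra h of Q containing J is normalised by some z \<in> Q - h (induction
      hypothesis for h acting on Q/h), so Q = span (insert z h)\<close>
    have sQ: "subspace Q"
      using Q(1) by (rule subalgebra_subspace)
    obtain h where h: "subalgebra h \<and> J \<subseteq> h \<and> h \<subset> Q"
      and hmax: "\<And>Y. subalgebra Y \<and> J \<subseteq> Y \<and> Y \<subset> Q \<Longrightarrow> dim Y \<le> dim h"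
      using ex_max_dim[of "\<lambda>Y. subalgebra Y \<and> J \<subseteq> Y \<and> Y \<subset> Q" J] False Q(2) ideal_imp_subalgebra[OF J]
      by blast
    have sh: "subspace h"
      using h subalgebra_subspace by blast
    have "dim h < dim Q"
      using h sh sQ by (intro dim_strict_mono) auto
    note IH = less.hyps[OF this]
    have IH_h: "\<exists>b\<in>B'. b \<notin> A' \<and> (\<forall>x\<in>h. br x b \<in> A')"
      if "subspace A'" "subspace B'" "J \<subseteq> A'" "A' \<subset> B'" "ad_invariant h A'" "ad_invariant h B'" for A' B'
      using IH[of A' B'] h Q(3) that by blast
    obtain z where z: "z \<in> Q" "z \<notin> h" "\<forall>x\<in>h. br x z \<in> h"
      using IH_h[of h Q] sh sQ h subalgebra_bracket[OF Q(1)] subalgebra_bracket[of h] by blast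
    have hQ: "span (insert z h) = Q"
      using h by (intro span_insert_eq_if_maximal[OF sQ _ _ _ hmax z]) auto
    obtain b0 where b0: "b0 \<in> B" "b0 \<notin> A" "\<forall>x\<in>h. br x b0 \<in> A"
      using IH_h[of A B] Q h by blast
    have AB: "A \<subseteq> B"
      using Q(7) by blast
    have z_facts: "fitting_null J z = UNIV" "ad_invariant {z} A" "ad_invariant {z} B"
      using Q(3,8,9) z(1) by auto
    have hA: "ad_invariant h A"
      using Q(8) h by blast
    have "\<exists>b\<in>B. b \<notin> A \<and> (\<forall>x\<in>span (insert z h). br x b \<in> A)"
      by (rule common_kernel_span_insert[OF J Q(6) Q(4) Q(5) AB z(3) z_facts sh hA b0])
    then show ?thesis
      using hQ by simp
  qed
qed

lemma fitting_null_add_ideal: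
  assumes J: "ideal J" and x: "fitting_null J x = UNIV" and j: "j \<in> J"
  shows "fitting_null J (x + j) = UNIV"
proof -
  have sJ: "subspace J"
    using J by (rule ideal_subspace)
  have diff: "(br (x + j) ^^ k) y - (br x ^^ k) y \<in> J" for k y
  proof (induction k)
    case (Suc k)
    have "(br (x + j) ^^ Suc k) y - (br x ^^ Suc k) y
       = br x ((br (x + j) ^^ k) y - (br x ^^ k) y) + br j ((br (x + j) ^^ k) y)"
      by (simp add: bracket_add_left bracket_diff_right)
    then show ?case
      using Suc ideal_bracket_right[OF J] ideal_bracket_left[OF J j] subspace_add[OF sJ] by simp
  qed (simp add: subspace_0[OF sJ])
  have "\<exists>k. (br (x + j) ^^ k) y \<in> J" for y
  proof -
    obtain k where "(br x ^^ k) y \<in> J"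
      using x unfolding fitting_null_def by blast
    then have "((br (x + j) ^^ k) y - (br x ^^ k) y) + (br x ^^ k) y \<in> J"
      using diff subspace_add[OF sJ] by blast
    then show ?thesis
      by auto
  qed
  then show ?thesis
    unfolding fitting_null_def by blast
qed

lemma engel_derived_proper:
  assumes J: "ideal J" and Q: "subalgebra Q" "J \<subset> Q" and nil: "\<forall>x\<in>Q. fitting_null J x = UNIV"
  shows "\<exists>A. subspace A \<and> J \<subseteq> A \<and> A \<subset> Q \<and> derived Q \<subseteq> A"
proof -
  have sQ: "subspace Q"
    using Q(1) by (rule subalgebra_subspace)
  define \<Phi> where "\<Phi> Y \<longleftrightarrow> subspace Y \<and> J \<subseteq> Y \<and> Y \<subset> Q \<and> ad_invariant Q Y" for Y
  have "\<Phi> J"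
    unfolding \<Phi>_def using J Q(2) ideal_subspace ideal_bracket_right by blast
  then obtain A where A: "\<Phi> A" and Amax: "\<And>Y. \<Phi> Y \<Longrightarrow> dim Y \<le> dim A"
    using ex_max_dim[of \<Phi> J] by blast
  have sA: "subspace A" "J \<subseteq> A" "A \<subset> Q" "ad_invariant Q A"
    using A unfolding \<Phi>_def by auto
  obtain b where b: "b \<in> Q" "b \<notin> A" "\<forall>x\<in>Q. br x b \<in> A"
    using engel_mod_ideal[OF J Q(1) _ nil sA(1) sQ sA(2,3,4)] Q(2) subalgebra_bracket[OF Q(1)] by blast
  define A' where "A' = span (insert b A)"
  have bracket_A': "br x u \<in> A" if x: "x \<in> Q" and u: "u \<in> A'" for x u
  proof -
    obtain c a where a: "a \<in> A" "u = a + c *s b"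
      using span_insert_subspaceE[OF sA(1)] u unfolding A'_def by metis
    then have "br x u = br x a + c *s br x b"
      by (simp add: bracket_add_right bracket_scale_right)
    then show ?thesis
      using sA(4) b(3) x a(1) by (simp add: subspace_add[OF sA(1)] subspace_scale[OF sA(1)])
  qed
  have AA': "A \<subset> A'"
    unfolding A'_def using b(2) span_superset[of "insert b A"] by blast
  have "A' = Q"
  proof (rule ccontr)
    assume "A' \<noteq> Q"
    moreover have "A' \<subseteq> Q"
      unfolding A'_def using sA b sQ by (intro span_minimal) auto
    ultimately have "\<Phi> A'"
      unfolding \<Phi>_def A'_def using sA(2) AA' bracket_A' by (auto simp: A'_def)
    then have "dim A' \<le> dim A"
      by (rule Amax)
    moreover have "dim A < dim A'"
      using sA(1) AA' unfolding A'_def by (intro dim_strict_mono) auto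
    ultimately show False
      by simp
  qed
  then have "derived Q \<subseteq> A"
    using bracket_A' by (intro derived_least sA(1)) blast
  with sA show ?thesis
    by blast
qed

lemma perfect_ideal_ex_not_nilpotent:
  assumes J: "ideal J" and P: "ideal P" "P \<subseteq> derived P" "\<not> P \<subseteq> J"
  shows "\<exists>x\<in>P. fitting_null J x \<noteq> UNIV"
proof (rule ccontr)
  assume "\<not> ?thesis"
  then have nil: "\<forall>x\<in>P. fitting_null J x = UNIV"
    by blast
  have sJ: "subspace J" and sP: "subspace P"
    using J P by (simp_all add: ideal_subspace)
  have Q: "subalgebra (P + J)"
    by (rule ideal_imp_subalgebra[OF ideal_set_plus[OF P(1) J]])
  have JQ: "J \<subset> P + J"
    using set_plus_subset_right[OF sP] set_plus_subset_left[OF sJ, of P] P(3) by blast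
  have "\<forall>x\<in>P + J. fitting_null J x = UNIV"
    using nil fitting_null_add_ideal[OF J] by (auto elim!: set_plus_elim)
  then obtain A where A: "subspace A" "J \<subseteq> A" "A \<subset> P + J" "derived (P + J) \<subseteq> A"
    using engel_derived_proper[OF J Q JQ] by blast
  have "P \<subseteq> A"
    using P(2) derived_mono[OF set_plus_subset_left[OF sJ, of P]] A(4) by blast
  then have "P + J \<subseteq> A"
    using A by (intro set_plus_least) auto
  with A(3) show False
    by blast
qed

lemma ex_maximal_subalgebra_superset:
  assumes "subalgebra S" "S \<noteq> UNIV"
  shows "\<exists>M. maximal_subalgebra sc br M \<and> S \<subseteq> M"
proof -
  obtain M where M: "subalgebra M \<and> S \<subseteq> M \<and> M \<noteq> UNIV"
    and Mmax: "\<And>Y. subalgebra Y \<and> S \<subseteq> Y \<and> Y \<noteq> UNIV \<Longrightarrow> dim Y \<le> dim M"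
    using ex_max_dim[of "\<lambda>Y. subalgebra Y \<and> S \<subseteq> Y \<and> Y \<noteq> UNIV" S] assms by blast
  have "N = M \<or> N = UNIV" if N: "subalgebra N" "M \<subseteq> N" for N
  proof (rule ccontr)
    assume "\<not> (N = M \<or> N = UNIV)"
    then have "dim N \<le> dim M" "dim M < dim N"
      using Mmax[of N] N M by (auto intro!: dim_strict_mono simp: subalgebra_subspace)
    then show False
      by simp
  qed
  with M show ?thesis
    unfolding maximal_subalgebra_def by blast
qed

text \<open>Relative form of the fact that a perfect ideal never lies in the Frattini subalgebra.\<close>

lemma ex_maximal_subalgebra_avoiding_perfect:
  assumes J: "ideal J" and P: "ideal P" "P \<subseteq> derived P" "\<not> P \<subseteq> J"
  shows "\<exists>M. maximal_subalgebra sc br M \<and> J \<subseteq> M \<and> \<not> P \<subseteq> M"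
proof -
  obtain x where x: "x \<in> P" "fitting_null J x \<noteq> UNIV"
    using perfect_ideal_ex_not_nilpotent[OF assms] by blast
  then obtain M where M: "maximal_subalgebra sc br M" "fitting_null J x \<subseteq> M"
    using ex_maximal_subalgebra_superset subalgebra_fitting_null[OF J] by blast
  have "\<not> P \<subseteq> M"
  proof
    assume "P \<subseteq> M"
    then have "fitting_null J x + P \<subseteq> M"
      using M by (intro set_plus_least maximal_subalgebra_subspace) auto
    with M(1) show False
      using fitting_null_plus_ideal[OF J P(1) x(1)] by (auto simp: maximal_subalgebra_def)
  qed
  with M show ?thesis
    using ideal_subset_fitting_null by blast
qed

subsection \<open>Common eigenvectors modulo a subspace\<close>

definition poly_op :: "'k poly \<Rightarrow> ('v \<Rightarrow> 'v) \<Rightarrow> 'v \<Rightarrow> 'v" where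
  "poly_op p T v = (\<Sum>i\<le>degree p. coeff p i *s (T ^^ i) v)"

lemma poly_op_eq_sum_lessThan:
  assumes "\<forall>i\<ge>n. coeff p i = 0"
  shows "poly_op p T v = (\<Sum>i<n. coeff p i *s (T ^^ i) v)"
proof -
  have "(\<Sum>i\<le>degree p. coeff p i *s (T ^^ i) v) = (\<Sum>i\<in>{..degree p} \<union> {..<n}. coeff p i *s (T ^^ i) v)"
    by (rule sum.mono_neutral_left) (auto simp: coeff_eq_0)
  also have "\<dots> = (\<Sum>i<n. coeff p i *s (T ^^ i) v)"
    by (rule sum.mono_neutral_right) (use assms in auto)
  finally show ?thesis
    unfolding poly_op_def .
qed

lemma poly_op_Poly: "poly_op (Poly (map c [0..<n])) T v = (\<Sum>i<n. c i *s (T ^^ i) v)"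
proof -
  have "poly_op (Poly (map c [0..<n])) T v = (\<Sum>i<n. coeff (Poly (map c [0..<n])) i *s (T ^^ i) v)"
    by (rule poly_op_eq_sum_lessThan) (simp add: nth_default_def)
  also have "\<dots> = (\<Sum>i<n. c i *s (T ^^ i) v)"
    by (rule sum.cong) (auto simp: nth_default_def)
  finally show ?thesis .
qed

lemma poly_op_linear_factor:
  assumes T: "module_hom sc sc T"
  shows "poly_op ([:- \<mu>, 1:] * q) T v = T (poly_op q T v) - \<mu> *s poly_op q T v"
proof -
  define n where "n = degree q + 1"
  have q_sum: "poly_op q T v = (\<Sum>i<m. coeff q i *s (T ^^ i) v)" if "n \<le> m" for m
    by (rule poly_op_eq_sum_lessThan) (use that in \<open>auto simp: n_def coeff_eq_0\<close>)
  have "[:- \<mu>, 1:] * q = pCons 0 q - smult \<mu> q"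
    by simp
  then have "poly_op ([:- \<mu>, 1:] * q) T v
      = (\<Sum>i<Suc n. coeff (pCons 0 q) i *s (T ^^ i) v) - (\<Sum>i<Suc n. (\<mu> * coeff q i) *s (T ^^ i) v)"
    by (subst poly_op_eq_sum_lessThan[where n="Suc n"])
      (auto simp: n_def coeff_eq_0 coeff_pCons scale_left_diff_distrib sum_subtractf split: nat.splits)
  also have "(\<Sum>i<Suc n. coeff (pCons 0 q) i *s (T ^^ i) v) = (\<Sum>i<n. coeff q i *s (T ^^ Suc i) v)"
    by (subst sum.lessThan_Suc_shift) simp
  also have "\<dots> = T (\<Sum>i<n. coeff q i *s (T ^^ i) v)"
    by (simp add: module_hom.sum[OF T] module_hom.scale[OF T])
  also have "(\<Sum>i<Suc n. (\<mu> * coeff q i) *s (T ^^ i) v) = \<mu> *s (\<Sum>i<Suc n. coeff q i *s (T ^^ i) v)"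
    by (simp only: scale_sum_right scale_scale)
  finally show ?thesis
    by (simp only: q_sum[OF order_refl, symmetric] q_sum[OF le_SucI[OF order_refl], symmetric])
qed

lemma ex_annihilating_poly: "\<exists>p. p \<noteq> 0 \<and> poly_op p T v = 0"
proof (cases "inj_on (\<lambda>i. (T ^^ i) v) {..<Suc dimension}")
  case True
  define S where "S = (\<lambda>i. (T ^^ i) v) ` {..<Suc dimension}"
  have "card S = Suc dimension"
    unfolding S_def using True by (simp add: card_image)
  then have "dependent S"
    using independent_bound_general[of S] dim_subset_UNIV[of S] by auto
  then obtain u where u: "\<exists>w\<in>S. u w \<noteq> 0" "(\<Sum>w\<in>S. u w *s w) = 0"
    using dependent_finite[of S] unfolding S_def by blast
  define c where "c i = u ((T ^^ i) v)" for i
  have "(\<Sum>i<Suc dimension. c i *s (T ^^ i) v) = (\<Sum>w\<in>S. u w *s w)"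
    unfolding S_def c_def by (subst sum.reindex[OF True]) simp
  moreover obtain i where "i < Suc dimension" "c i \<noteq> 0"
    using u(1) unfolding S_def c_def by auto
  ultimately show ?thesis
    using u(2) poly_op_Poly[of c "Suc dimension" T v] Poly_map_upt_nonzero by metis
next
  case False
  then obtain i j where ij: "i < Suc dimension" "j < Suc dimension" "i \<noteq> j" "(T ^^ i) v = (T ^^ j) v"
    unfolding inj_on_def by auto
  define c where "c k = (if k = i then 1 else if k = j then - 1 else (0::'k))" for k
  have "c k *s (T ^^ k) v = (if k = i then (T ^^ i) v else 0) + (if k = j then - (T ^^ j) v else 0)" for k
    unfolding c_def using ij(3) by (auto simp: scale_minus_left)
  then have "(\<Sum>k<Suc dimension. c k *s (T ^^ k) v) = (T ^^ i) v - (T ^^ j) v"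
    using ij by (simp add: sum.distrib sum_negf)
  then have "poly_op (Poly (map c [0..<Suc dimension])) T v = 0"
    using ij(4) poly_op_Poly[of c "Suc dimension" T v] by simp
  moreover have "Poly (map c [0..<Suc dimension]) \<noteq> 0"
    using ij by (intro Poly_map_upt_nonzero[of i]) (auto simp: c_def)
  ultimately show ?thesis
    by blast
qed

lemma poly_op_in_invariant:
  assumes "subspace W" "T ` W \<subseteq> W" "v \<in> W"
  shows "poly_op p T v \<in> W"
proof -
  have "(T ^^ i) v \<in> W" for i
    by (induction i) (use assms in auto)
  then show ?thesis
    unfolding poly_op_def by (intro subspace_sum[OF assms(1)] subspace_scale[OF assms(1)])
qed

text \<open>\<open>T v - \<mu> *s v \<in> C\<close> says that v + C is an eigenvector of the map induced by T on the
  quotient by C.\<close>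

lemma ex_eigenvector_mod:
  assumes acf: "alg_closed_field TYPE('k)" and T: "module_hom sc sc T"
    and C: "subspace C" and W: "subspace W" "C \<subset> W" "T ` W \<subseteq> W"
  shows "\<exists>v\<in>W. v \<notin> C \<and> (\<exists>\<mu>. T v - \<mu> *s v \<in> C)"
proof -
  obtain v0 where v0: "v0 \<in> W" "v0 \<notin> C"
    using W(2) by blast
  obtain p0 where "p0 \<noteq> 0" "poly_op p0 T v0 = 0"
    using ex_annihilating_poly by blast
  then obtain p where p: "p \<noteq> 0" "poly_op p T v0 \<in> C"
    and pmin: "\<And>q. q \<noteq> 0 \<and> poly_op q T v0 \<in> C \<Longrightarrow> degree p \<le> degree q"
    using ex_has_least_nat[of "\<lambda>q. q \<noteq> 0 \<and> poly_op q T v0 \<in> C" p0 degree] subspace_0[OF C] by auto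
  have "degree p \<noteq> 0"
  proof
    assume deg: "degree p = 0"
    then have "poly_op p T v0 = coeff p 0 *s v0"
      unfolding poly_op_def by simp
    moreover have "coeff p 0 \<noteq> 0"
      using deg p(1) by (metis leading_coeff_0_iff)
    ultimately have "v0 = inverse (coeff p 0) *s poly_op p T v0"
      by simp
    then show False
      using subspace_scale[OF C p(2)] v0 by metis
  qed
  then obtain \<mu> where "poly p \<mu> = 0"
    using acf unfolding alg_closed_field_def by blast
  then obtain q where q: "p = [:- \<mu>, 1:] * q"
    by (metis dvdE poly_eq_0_iff_dvd)
  with p(1) have "q \<noteq> 0"
    by auto
  then have "degree p = degree [:- \<mu>, 1:] + degree q"
    unfolding q by (intro degree_mult_eq) simp_all
  then have "poly_op q T v0 \<notin> C"
    using pmin[of q] \<open>q \<noteq> 0\<close> by auto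
  moreover have "poly_op q T v0 \<in> W"
    by (rule poly_op_in_invariant[OF W(1,3) v0(1)])
  moreover have "T (poly_op q T v0) - \<mu> *s poly_op q T v0 \<in> C"
    using p(2) q poly_op_linear_factor[OF T] by simp
  ultimately show ?thesis
    by blast
qed

lemma subspace_eigenspace_mod:
  assumes T: "module_hom sc sc T" and C: "subspace C" and W: "subspace W"
  shows "subspace {u \<in> W. T u - \<mu> *s u \<in> C}"
proof (rule subspaceI)
  show "0 \<in> {u \<in> W. T u - \<mu> *s u \<in> C}"
    using subspace_0[OF W] subspace_0[OF C] module_hom.zero[OF T] by simp
next
  fix x y
  assume "x \<in> {u \<in> W. T u - \<mu> *s u \<in> C}" "y \<in> {u \<in> W. T u - \<mu> *s u \<in> C}"
  moreover have "T (x + y) - \<mu> *s (x + y) = (T x - \<mu> *s x) + (T y - \<mu> *s y)"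
    by (simp add: module_hom.add[OF T] scale_right_distrib algebra_simps)
  ultimately show "x + y \<in> {u \<in> W. T u - \<mu> *s u \<in> C}"
    using subspace_add[OF W] subspace_add[OF C] by auto
next
  fix c x
  assume "x \<in> {u \<in> W. T u - \<mu> *s u \<in> C}"
  moreover have "T (c *s x) - \<mu> *s (c *s x) = c *s (T x - \<mu> *s x)"
    by (simp add: module_hom.scale[OF T] scale_right_diff_distrib scale_left_commute)
  ultimately show "c *s x \<in> {u \<in> W. T u - \<mu> *s u \<in> C}"
    using subspace_scale[OF W] subspace_scale[OF C] by auto
qed

lemma eigenspace_mod_invariant:
  assumes T': "module_hom sc sc T'" "T' ` W \<subseteq> W" "T' ` C \<subseteq> C"
    and C: "subspace C" and comm: "\<forall>v. T (T' v) - T' (T v) \<in> C"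
  shows "T' ` {u \<in> W. T u - \<mu> *s u \<in> C} \<subseteq> {u \<in> W. T u - \<mu> *s u \<in> C}"
proof safe
  fix u
  assume u: "u \<in> W" "T u - \<mu> *s u \<in> C"
  have "T (T' u) - \<mu> *s T' u = (T (T' u) - T' (T u)) + T' (T u - \<mu> *s u)"
    by (simp add: module_hom.diff[OF T'(1)] module_hom.scale[OF T'(1)])
  also have "\<dots> \<in> C"
    using comm u(2) T'(3) by (intro subspace_add[OF C]) auto
  finally show "T (T' u) - \<mu> *s T' u \<in> C" .
  show "T' u \<in> W"
    using u(1) T'(2) by blast
qed

lemma ex_common_eigenvector_mod:
  assumes acf: "alg_closed_field TYPE('k)" and C: "subspace C" "C \<noteq> UNIV"
    and F: "\<forall>T\<in>F. module_hom sc sc T \<and> T ` C \<subseteq> C"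
    and comm: "\<forall>T\<in>F. \<forall>T'\<in>F. \<forall>v. T (T' v) - T' (T v) \<in> C"
  shows "\<exists>v. v \<notin> C \<and> (\<forall>T\<in>F. \<exists>\<mu>. T v - \<mu> *s v \<in> C)"
proof -
  define \<Phi> where "\<Phi> Y \<longleftrightarrow> subspace Y \<and> C \<subset> Y \<and> (\<forall>T\<in>F. T ` Y \<subseteq> Y)" for Y
  have "\<Phi> UNIV"
    unfolding \<Phi>_def using C by auto
  then obtain W where W: "\<Phi> W" and Wmin: "\<And>Y. \<Phi> Y \<Longrightarrow> dim W \<le> dim Y"
    using ex_min_dim[of \<Phi> UNIV] by blast
  have sW: "subspace W" "C \<subset> W" "\<forall>T\<in>F. T ` W \<subseteq> W"
    using W unfolding \<Phi>_def by auto
  show ?thesis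
  proof (cases "\<forall>T\<in>F. \<forall>w\<in>W. \<exists>\<mu>. T w - \<mu> *s w \<in> C")
    case True
    with sW(2) show ?thesis
      by blast
  next
    case False
    then obtain T w where Tw: "T \<in> F" "w \<in> W" "\<forall>\<mu>. T w - \<mu> *s w \<notin> C"
      by blast
    have T: "module_hom sc sc T" "T ` C \<subseteq> C"
      using F Tw(1) by auto
    obtain v \<mu> where v: "v \<in> W" "v \<notin> C" "T v - \<mu> *s v \<in> C"
      using ex_eigenvector_mod[OF acf T(1) C(1) sW(1,2)] sW(3) Tw(1) by blast
    define W' where "W' = {u \<in> W. T u - \<mu> *s u \<in> C}"
    have "\<Phi> W'"
      unfolding \<Phi>_def
    proof (intro conjI ballI)
      show "subspace W'"
        unfolding W'_def by (rule subspace_eigenspace_mod[OF T(1) C(1) sW(1)])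
      show "C \<subset> W'"
        unfolding W'_def using sW(2) T(2) v subspace_diff[OF C(1)] subspace_scale[OF C(1)] by blast
      show "T' ` W' \<subseteq> W'" if "T' \<in> F" for T'
        unfolding W'_def using F sW(3) comm that Tw(1) C(1) by (intro eigenspace_mod_invariant) auto
    qed
    then have "dim W \<le> dim W'"
      by (rule Wmin)
    moreover have "dim W' < dim W"
      using \<open>\<Phi> W'\<close> sW Tw unfolding W'_def \<Phi>_def by (intro dim_strict_mono) auto
    ultimately show ?thesis
      by simp
  qed
qed

subsection \<open>Non-solvable algebras\<close>

lemma not_solvable_ex_perfect_ideal:
  assumes "\<not> solvable_lie sc br"
  shows "\<exists>P. ideal P \<and> P \<subseteq> derived P \<and> \<not> P \<subseteq> {0}"
proof -
  have "subspace (derived_series sc br n)" "derived_series sc br (Suc n) \<subseteq> derived_series sc br n" for n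
    using ideal_derived_series[of n] derived_subset[OF ideal_imp_subalgebra[OF ideal_derived_series]]
    by (simp_all add: ideal_subspace derived_series_Suc_eq_derived del: derived_series.simps(2))
  then obtain m where m: "derived_series sc br (Suc m) = derived_series sc br m"
    by (rule decreasing_subspaces_stabilize)
  then have "derived_series sc br m \<subseteq> derived (derived_series sc br m)"
    by (simp add: derived_series_Suc_eq_derived del: derived_series.simps(2))
  moreover have "\<not> derived_series sc br m \<subseteq> {0}"
    using assms subspace_0[OF ideal_subspace[OF ideal_derived_series]] unfolding solvable_lie_def by blast
  ultimately show ?thesis
    using ideal_derived_series by blast
qed

lemma ex_ideal_maximal_avoiding:
  assumes "\<not> P \<subseteq> {0}"
  shows "\<exists>N. ideal N \<and> \<not> P \<subseteq> N \<and> (\<forall>I. ideal I \<and> \<not> I \<subseteq> N \<longrightarrow> P \<subseteq> I + N)"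
proof -
  define \<Psi> where "\<Psi> Y \<longleftrightarrow> ideal Y \<and> \<not> P \<subseteq> Y" for Y
  have "\<Psi> {0}"
    unfolding \<Psi>_def using ideal_zero assms by blast
  then obtain N where N: "\<Psi> N" and Nmax: "\<And>Y. \<Psi> Y \<Longrightarrow> dim Y \<le> dim N"
    using ex_max_dim[of \<Psi> "{0}"] by blast
  have sN: "subspace N"
    using N ideal_subspace unfolding \<Psi>_def by blast
  have "P \<subseteq> I + N" if I: "ideal I" "\<not> I \<subseteq> N" for I
  proof (rule ccontr)
    assume "\<not> P \<subseteq> I + N"
    then have "dim (I + N) \<le> dim N"
      using Nmax ideal_set_plus[OF I(1)] N unfolding \<Psi>_def by blast
    moreover have "N \<subset> I + N"
      using set_plus_subset_right[OF ideal_subspace[OF I(1)]] set_plus_subset_left[OF sN, of I] I(2) by blast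
    then have "dim N < dim (I + N)"
      using sN ideal_subspace[OF I(1)] by (intro dim_strict_mono subspace_set_plus) auto
    ultimately show False
      by simp
  qed
  with N show ?thesis
    unfolding \<Psi>_def by blast
qed

lemma completion_if_avoiding:
  assumes N: "\<forall>I. ideal I \<and> \<not> I \<subseteq> N \<longrightarrow> P \<subseteq> I + N" "N \<subseteq> M"
    and Y: "subalgebra Y" "\<not> Y \<subseteq> M" "N \<subseteq> Y" "\<not> P \<subseteq> Y"
  shows "completion sc br M Y"
  unfolding completion_def
proof (intro conjI allI impI Y(1,2))
  fix I
  assume I: "ideal I \<and> I \<subset> Y"
  show "I \<subseteq> M"
  proof (rule ccontr)
    assume "\<not> I \<subseteq> M"
    then have "P \<subseteq> I + N"
      using N I by blast
    also have "I + N \<subseteq> Y"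
      using I Y(3) subalgebra_subspace[OF Y(1)] by (intro set_plus_least) auto
    finally show False
      using Y(4) by blast
  qed
qed

lemma strict_core_subset_completion:
  assumes "completion sc br M C" "subspace M"
  shows "strict_core sc br C \<subseteq> M"
proof -
  have "\<Union>{I. ideal I \<and> I \<subset> C} \<subseteq> M"
    using assms(1) unfolding completion_def by blast
  then show ?thesis
    unfolding strict_core_def using assms(2) by (rule span_minimal)
qed

lemma abelian_completion_bracket_in_avoiding:
  assumes N: "ideal N" "\<forall>I. ideal I \<and> \<not> I \<subseteq> N \<longrightarrow> P \<subseteq> I + N"
    and M: "subspace M" "N \<subseteq> M" "\<not> P \<subseteq> M"
    and C: "completion sc br M C" "abelian_mod_strict_core sc br C"
    and xy: "x \<in> C" "y \<in> C"
  shows "br x y \<in> N"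
proof -
  define K where "K = strict_core sc br C"
  have KM: "K \<subseteq> M"
    unfolding K_def using strict_core_subset_completion[OF C(1) M(1)] .
  have "K \<subseteq> N"
  proof (rule ccontr)
    assume "\<not> K \<subseteq> N"
    then have "P \<subseteq> K + N"
      using N(2) ideal_strict_core unfolding K_def by blast
    also have "K + N \<subseteq> M"
      using KM M(2) M(1) by (rule set_plus_least)
    finally show False
      using M(3) by blast
  qed
  then show ?thesis
    using C(2) xy unfolding abelian_mod_strict_core_def K_def by blast
qed

lemma maximal_completion_contains_avoiding:
  assumes N: "ideal N" "\<forall>I. ideal I \<and> \<not> I \<subseteq> N \<longrightarrow> P \<subseteq> I + N" "N \<subseteq> M"
    and P: "P \<subseteq> derived P" "\<not> P \<subseteq> N"
    and C: "maximal_completion sc br M C" and CCN: "\<forall>x\<in>C. \<forall>y\<in>C. br x y \<in> N"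
  shows "N \<subseteq> C"
proof -
  have sN: "subspace N" and sC: "subspace C"
    using N(1) C by (simp_all add: ideal_subspace maximal_completion_def completion_def subalgebra_subspace)
  have CC': "C \<subseteq> C + N" and NC': "N \<subseteq> C + N"
    using set_plus_subset_left[OF sN] set_plus_subset_right[OF sC] by auto
  have bracket_C': "br x y \<in> N" if x: "x \<in> C + N" and y: "y \<in> C + N" for x y
  proof -
    obtain c1 n1 where 1: "x = c1 + n1" "c1 \<in> C" "n1 \<in> N"
      using x by (auto elim: set_plus_elim)
    obtain c2 n2 where 2: "y = c2 + n2" "c2 \<in> C" "n2 \<in> N"
      using y by (auto elim: set_plus_elim)
    have "br x y = br c1 c2 + br c1 n2 + (br n1 c2 + br n1 n2)"
      using 1(1) 2(1) by (simp add: bracket_add_left bracket_add_right add_ac)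
    then show ?thesis
      using 1 2 CCN ideal_bracket_right[OF N(1)] ideal_bracket_left[OF N(1)] by (simp add: subspace_add[OF sN])
  qed
  have "completion sc br M (C + N)"
  proof (rule completion_if_avoiding[OF N(2,3)])
    show "subalgebra (C + N)"
      using subspace_set_plus[OF sC sN] bracket_C' NC' by (intro subalgebraI) blast+
    show "\<not> C + N \<subseteq> M"
      using CC' C unfolding maximal_completion_def completion_def by blast
    show "\<not> P \<subseteq> C + N"
      using perfect_subset[OF P(1) _ bracket_C' sN] P(2) by blast
  qed (rule NC')
  then have "C + N = C"
    using C CC' unfolding maximal_completion_def by blast
  with NC' show ?thesis
    by simp
qed

lemma bracket_span_insert:
  assumes C: "subspace C" and Z: "subspace Z" and w: "\<forall>c\<in>C. br c w \<in> Z" and CC: "\<forall>c\<in>C. \<forall>d\<in>C. br c d \<in> Z"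
    and y: "y1 \<in> span (insert w C)" "y2 \<in> span (insert w C)"
  shows "br y1 y2 \<in> Z"
proof -
  obtain a1 c1 where 1: "c1 \<in> C" "y1 = c1 + a1 *s w"
    using span_insert_subspaceE[OF C y(1)] .
  obtain a2 c2 where 2: "c2 \<in> C" "y2 = c2 + a2 *s w"
    using span_insert_subspaceE[OF C y(2)] .
  have "br y1 y2 = br c1 c2 + a2 *s br c1 w + a1 *s (- br c2 w)"
    using 1 2 bracket_anticomm[of w c2]
    by (simp add: bracket_add_left bracket_add_right bracket_scale_left bracket_scale_right bracket_self add_ac)
  also have "\<dots> \<in> Z"
    using 1 2 w CC by (intro subspace_add[OF Z] subspace_scale[OF Z] subspace_neg[OF Z]) auto
  finally show ?thesis .
qed

lemma bracket_eigenvector_mod: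
  assumes N: "ideal N" "N \<subseteq> C" and C: "subspace C" and CCN: "\<forall>x\<in>C. \<forall>y\<in>C. br x y \<in> N"
    and v: "\<forall>c\<in>C. \<exists>\<mu>. br c v - \<mu> *s v \<in> C" and c0: "c0 \<in> C" and c: "c \<in> C"
  shows "\<exists>\<mu>. br c (br c0 v) - \<mu> *s br c0 v \<in> N"
proof -
  obtain \<mu> where "br c v - \<mu> *s v \<in> C"
    using v c by blast
  then obtain d where d: "d \<in> C" "br c v = \<mu> *s v + d"
    by (metis add.commute diff_add_cancel)
  have "br c (br c0 v) = br (br c c0) v + br c0 (br c v)"
    by (rule bracket_derivation)
  also have "\<dots> = br (br c c0) v + \<mu> *s br c0 v + br c0 d"
    using d(2) by (simp add: bracket_add_right bracket_scale_right add_ac)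
  finally have "br c (br c0 v) - \<mu> *s br c0 v = br (br c c0) v + br c0 d"
    by simp
  also have "\<dots> \<in> N"
    using CCN c c0 d(1) ideal_bracket_left[OF N(1)] by (intro subspace_add[OF ideal_subspace[OF N(1)]]) auto
  finally show ?thesis
    by blast
qed

lemma ex_common_eigenvector_ad_mod:
  assumes acf: "alg_closed_field TYPE('k)" and N: "ideal N" "N \<subseteq> C"
    and C: "subalgebra C" "C \<noteq> UNIV" and CCN: "\<forall>x\<in>C. \<forall>y\<in>C. br x y \<in> N"
  shows "\<exists>v. v \<notin> C \<and> (\<forall>c\<in>C. \<exists>\<mu>. br c v - \<mu> *s v \<in> C)"
proof -
  have "\<exists>v. v \<notin> C \<and> (\<forall>T\<in>br ` C. \<exists>\<mu>. T v - \<mu> *s v \<in> C)"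
  proof (rule ex_common_eigenvector_mod[OF acf subalgebra_subspace[OF C(1)] C(2)])
    show "\<forall>T\<in>br ` C. module_hom sc sc T \<and> T ` C \<subseteq> C"
      using module_hom_bracket subalgebra_bracket[OF C(1)] by blast
    have "br c1 (br c2 v) - br c2 (br c1 v) \<in> C" if "c1 \<in> C" "c2 \<in> C" for c1 c2 v
      using bracket_derivation[of c1 c2 v] CCN that ideal_bracket_left[OF N(1)] N(2) by auto
    then show "\<forall>T\<in>br ` C. \<forall>T'\<in>br ` C. \<forall>v. T (T' v) - T' (T v) \<in> C"
      by blast
  qed
  then show ?thesis
    by blast
qed

lemma ex_metabelian_extension:
  assumes acf: "alg_closed_field TYPE('k)" and N: "ideal N" "N \<subseteq> C"
    and C: "subalgebra C" "C \<noteq> UNIV" and CCN: "\<forall>x\<in>C. \<forall>y\<in>C. br x y \<in> N"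
  shows "\<exists>w Z. w \<notin> C \<and> subspace Z \<and> Z \<subseteq> span (insert w C)
    \<and> (\<forall>y1\<in>span (insert w C). \<forall>y2\<in>span (insert w C). br y1 y2 \<in> Z) \<and> (\<forall>z1\<in>Z. \<forall>z2\<in>Z. br z1 z2 \<in> N)"
proof -
  have sC: "subspace C" and sN: "subspace N"
    using C(1) N(1) by (simp_all add: subalgebra_subspace ideal_subspace)
  obtain v where v: "v \<notin> C" "\<forall>c\<in>C. \<exists>\<mu>. br c v - \<mu> *s v \<in> C"
    using ex_common_eigenvector_ad_mod[OF acf N C CCN] by blast
  \<comment> \<open>either v itself normalises C, or some w = [c0, v] \<notin> C is a common eigenvector of ad C
    modulo N\<close>
  show ?thesis
  proof (cases "\<forall>c\<in>C. br c v \<in> C")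
    case True
    then show ?thesis
      using v(1) sC CCN N(2) subalgebra_bracket[OF C(1)] span_superset[of "insert v C"]
      by (intro exI[of _ v] exI[of _ C]) (auto intro: bracket_span_insert)
  next
    case False
    then obtain c0 where c0: "c0 \<in> C" "br c0 v \<notin> C"
      by blast
    define w where "w = br c0 v"
    obtain \<mu>0 where "br c0 v - \<mu>0 *s v \<in> C"
      using v(2) c0(1) by blast
    then have "w \<notin> C"
      using subspace_diff[OF sC] subspace_scale[OF sC] c0(2) v(1) unfolding w_def
      by (metis (no_types, lifting) diff_diff_cancel scale_eq_0_iff scale_left_imp_eq)
    moreover have "\<forall>c\<in>C. br c w \<in> span (insert w N)"
    proof
      fix c
      assume "c \<in> C"
      have "\<exists>\<mu>. br c w - \<mu> *s w \<in> N"
        unfolding w_def by (rule bracket_eigenvector_mod[OF N sC CCN v(2) c0(1) \<open>c \<in> C\<close>])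
      then show "br c w \<in> span (insert w N)"
        unfolding span_breakdown_eq using span_superset by blast
    qed
    moreover have "\<forall>c\<in>C. \<forall>d\<in>C. br c d \<in> span (insert w N)"
      using CCN span_superset by blast
    moreover have "\<forall>z1\<in>span (insert w N). \<forall>z2\<in>span (insert w N). br z1 z2 \<in> N"
      using sN ideal_bracket_left[OF N(1)] ideal_bracket_right[OF N(1)] by (auto intro: bracket_span_insert)
    moreover have "span (insert w N) \<subseteq> span (insert w C)"
      using N(2) by (intro span_mono) blast
    ultimately show ?thesis
      using sC by (intro exI[of _ w] exI[of _ "span (insert w N)"]) (auto intro: bracket_span_insert)
  qed
qed

theorem abelian_maximal_completions_imp_solvable:
  assumes acf: "alg_closed_field TYPE('k)"
    and H: "\<forall>M. maximal_subalgebra sc br M \<longrightarrow>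
      (\<exists>C. maximal_completion sc br M C \<and> abelian_mod_strict_core sc br C)"
  shows "solvable_lie sc br"
proof (rule ccontr)
  assume "\<not> solvable_lie sc br"
  then obtain P where P: "ideal P" "P \<subseteq> derived P" "\<not> P \<subseteq> {0}"
    using not_solvable_ex_perfect_ideal by blast
  obtain N where N: "ideal N" "\<not> P \<subseteq> N" and avoid: "\<forall>I. ideal I \<and> \<not> I \<subseteq> N \<longrightarrow> P \<subseteq> I + N"
    using ex_ideal_maximal_avoiding[OF P(3)] by blast
  obtain M where M: "maximal_subalgebra sc br M" "N \<subseteq> M" "\<not> P \<subseteq> M"
    using ex_maximal_subalgebra_avoiding_perfect[OF N(1) P(1,2) N(2)] by blast
  obtain C where C: "maximal_completion sc br M C" "abelian_mod_strict_core sc br C"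
    using H M(1) by blast
  have sM: "subspace M" and compC: "completion sc br M C" and lC: "subalgebra C"
    using M(1) C(1) by (auto simp: maximal_subalgebra_subspace maximal_completion_def completion_def)
  have CCN: "\<forall>x\<in>C. \<forall>y\<in>C. br x y \<in> N"
    using abelian_completion_bracket_in_avoiding[OF N(1) avoid sM M(2,3) compC C(2)] by blast
  have NC: "N \<subseteq> C"
    by (rule maximal_completion_contains_avoiding[OF N(1) avoid M(2) P(2) N(2) C(1) CCN])
  have "C \<noteq> UNIV"
    using perfect_subset[OF P(2), of UNIV N] CCN N(1,2) by (auto simp: ideal_subspace)
  then obtain w Z where w: "w \<notin> C" and Z: "subspace Z" "Z \<subseteq> span (insert w C)"
    and YZ: "\<forall>y1\<in>span (insert w C). \<forall>y2\<in>span (insert w C). br y1 y2 \<in> Z"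
    and ZN: "\<forall>z1\<in>Z. \<forall>z2\<in>Z. br z1 z2 \<in> N"
    using ex_metabelian_extension[OF acf N(1) NC lC _ CCN] by blast
  have CY: "C \<subseteq> span (insert w C)"
    using span_superset by blast
  have "completion sc br M (span (insert w C))"
  proof (rule completion_if_avoiding[OF avoid M(2)])
    show "subalgebra (span (insert w C))"
      using YZ Z(2) by (intro subalgebraI) auto
    show "\<not> P \<subseteq> span (insert w C)"
      using perfect_subset[OF P(2) _ _ Z(1), of "span (insert w C)"]
        perfect_subset[OF P(2) _ _ ideal_subspace[OF N(1)], of Z] YZ ZN N(2) by blast
  qed (use CY compC NC in \<open>auto simp: completion_def\<close>)
  then have "span (insert w C) = C"
    using C(1) CY unfolding maximal_completion_def by blast
  with w show False
    using span_base[of w "insert w C"] by blast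
qed

end

theorem corollary3p4:
  fixes sc :: "'k::field \<Rightarrow> 'v::ab_group_add \<Rightarrow> 'v"
    and br :: "'v \<Rightarrow> 'v \<Rightarrow> 'v"
  assumes "alg_closed_field TYPE('k)"
    and "lie_algebra sc br"
    and "finite_dim sc"
  shows "solvable_lie sc br \<longleftrightarrow>
    (\<forall>M. maximal_subalgebra sc br M \<longrightarrow>
       (\<exists>C. maximal_completion sc br M C \<and> abelian_mod_strict_core sc br C))"
proof -
  interpret vector_space sc
    using assms(2) unfolding lie_algebra_def by blast
  obtain B where B: "finite B" "span B = UNIV"
    using assms(3) unfolding finite_dim_def by blast
  obtain Basis where Basis: "independent Basis" "UNIV \<subseteq> span Basis"
    using basis_exists[of UNIV] by blast
  then have "finite Basis"
    using independent_span_bound[OF B(1) Basis(1)] B(2) by simp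
  with Basis assms(2) interpret fin_dim_lie_algebra sc Basis br
    by unfold_locales (auto simp: lie_algebra_def)
  show ?thesis
    using solvable_imp_abelian_maximal_completion abelian_maximal_completions_imp_solvable[OF assms(1)]
    by blast
qed

end
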